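(* The map $A\mapsto c(A)\bmod 2$ from $\mathrm{SL}(2,\mathbb Z)$ to $\mathbb Z/2$ satisfies $c(-A)=c(A)$, and the induced map on the modular group $\mathrm{SL}(2,\mathbb Z)/\{\pm I\}$ coincides with the unique surjective group homomorphism from the modular group onto $\mathbb Z/2$.
   Context: Admissible hexagons are the sets $\{\pm a,\pm b,\pm(a+b)\}\subset\mathbb Z^2$ with $(a,b)$ a basis of $\mathbb Z^2$ (corresponding to isotopy classes of $\theta$-curves in $T^2$). $\Gamma$ is the graph on admissible hexagons, two adjacent iff they share two opposite pairs of vertices $\pm\sigma,\pm\mu$ (a flip); it is a trivalent tree with graph distance $d$, acted on by $\mathrm{SL}(2,\mathbb Z)$. With $W_0=\{\pm(1,0),\pm(0,1),\pm(1,-1)\}$, $c(A)=d(W_0,AW_0)$. *)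

theory Defs
  imports Main
begin

text \<open>Vectors of Z^2 as pairs of integers; 2x2 integer matrices (a,b,c,d) = [[a,b],[c,d]].\<close>

type_synonym vec = "int \<times> int"
type_synonym mat = "int \<times> int \<times> int \<times> int"

definition vadd :: "vec \<Rightarrow> vec \<Rightarrow> vec" where
  "vadd u v = (fst u + fst v, snd u + snd v)"

definition vneg :: "vec \<Rightarrow> vec" where
  "vneg u = (- fst u, - snd u)"

definition vsmul :: "int \<Rightarrow> vec \<Rightarrow> vec" where
  "vsmul m u = (m * fst u, m * snd u)"

definition is_basis :: "vec \<Rightarrow> vec \<Rightarrow> bool" where
  "is_basis a b \<longleftrightarrow> (\<forall>v. \<exists>!mn::int\<times>int. v = vadd (vsmul (fst mn) a) (vsmul (snd mn) b))"

definition hexagon :: "vec \<Rightarrow> vec \<Rightarrow> vec set" where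
  "hexagon a b = {a, vneg a, b, vneg b, vadd a b, vneg (vadd a b)}"

definition admissible :: "vec set \<Rightarrow> bool" where
  "admissible H \<longleftrightarrow> (\<exists>a b. is_basis a b \<and> H = hexagon a b)"

definition adj :: "vec set \<Rightarrow> vec set \<Rightarrow> bool" where
  "adj H K \<longleftrightarrow> admissible H \<and> admissible K \<and> H \<noteq> K \<and>
     (\<exists>\<sigma> \<mu>. \<mu> \<noteq> \<sigma> \<and> \<mu> \<noteq> vneg \<sigma> \<and> {\<sigma>, vneg \<sigma>, \<mu>, vneg \<mu>} \<subseteq> H \<inter> K)"

text \<open>Graph distance in Gamma (Gamma is connected, being a tree).\<close>
definition gdist :: "vec set \<Rightarrow> vec set \<Rightarrow> nat" where
  "gdist H K = (LEAST n. (adj ^^ n) H K)"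

definition W0 :: "vec set" where
  "W0 = {(1,0), (-1,0), (0,1), (0,-1), (1,-1), (-1,1)}"

definition mapply :: "mat \<Rightarrow> vec \<Rightarrow> vec" where
  "mapply M v = (case M of (a,b,c,d) \<Rightarrow> (a * fst v + b * snd v, c * fst v + d * snd v))"

definition mmul :: "mat \<Rightarrow> mat \<Rightarrow> mat" where
  "mmul M N = (case M of (a,b,c,d) \<Rightarrow> case N of (e,f,g,h) \<Rightarrow>
      (a*e + b*g, a*f + b*h, c*e + d*g, c*f + d*h))"

definition mneg :: "mat \<Rightarrow> mat" where
  "mneg M = (case M of (a,b,c,d) \<Rightarrow> (-a,-b,-c,-d))"

definition mdet :: "mat \<Rightarrow> int" where
  "mdet M = (case M of (a,b,c,d) \<Rightarrow> a*d - b*c)"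

definition SL2Z :: "mat set" where
  "SL2Z = {M. mdet M = 1}"

definition cfun :: "mat \<Rightarrow> nat" where
  "cfun A = gdist W0 (mapply A ` W0)"

text \<open>Z/2 is represented by {0,1} :: int with addition mod 2.
  A map f is a group homomorphism SL(2,Z) -> Z/2.\<close>
definition hom_Z2 :: "(mat \<Rightarrow> int) \<Rightarrow> bool" where
  "hom_Z2 f \<longleftrightarrow> (\<forall>A\<in>SL2Z. f A \<in> {0,1}) \<and>
     (\<forall>A\<in>SL2Z. \<forall>B\<in>SL2Z. f (mmul A B) = (f A + f B) mod 2)"

end

theory Submission
  imports Defs
begin

text \<open>
  The parity of c is the character chi of SL(2,Z) obtained by reduction mod 2 followed by the
  sign of SL(2,F2) = S3. It vanishes on the stabiliser of W0, so chi A depends only on the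
  hexagon A W0. The three neighbours of W0 are T W0, T^-1 W0 and L W0 with L = [[1,0],[-1,1]],
  and chi is 1 on T, T^-1 and L; hence every flip changes chi, and every path from W0 to A W0
  has length congruent to chi A mod 2. Such paths exist because S and T generate SL(2,Z) and
  S W0 = T W0 is adjacent to W0. Finally, a homomorphism onto Z/2 is determined by its value
  on T: the relation (ST)^3 = S^2 forces equal values on S and T, and that value must be 1 for
  the homomorphism to be onto.
\<close>

definition madj :: "mat \<Rightarrow> mat" where
  "madj M = (case M of (a,b,c,d) \<Rightarrow> (d,-b,-c,a))"

definition matI :: mat where "matI = (1,0,0,1)"
definition matS :: mat where "matS = (0,-1,1,0)"
definition matS' :: mat where "matS' = (0,1,-1,0)"
definition matT :: mat where "matT = (1,1,0,1)"
definition matT' :: mat where "matT' = (1,-1,0,1)"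
definition matL :: mat where "matL = (1,0,-1,1)"

lemmas special_mat_defs = matI_def matS_def matS'_def matT_def matT'_def matL_def

lemma special_mats_SL2Z:
  shows matI_SL2Z: "matI \<in> SL2Z" and matS_SL2Z: "matS \<in> SL2Z" and matS'_SL2Z: "matS' \<in> SL2Z"
    and matT_SL2Z: "matT \<in> SL2Z" and matT'_SL2Z: "matT' \<in> SL2Z" and matL_SL2Z: "matL \<in> SL2Z"
  by (simp_all add: SL2Z_def mdet_def special_mat_defs)

lemma vneg_vneg [simp]: "vneg (vneg u) = u"
  by (simp add: vneg_def)

lemma vadd_commute: "vadd u v = vadd v u"
  by (simp add: vadd_def add.commute)

lemma vadd_vneg_vneg [simp]: "vadd (vneg u) (vneg v) = vneg (vadd u v)"
  by (simp add: vadd_def vneg_def)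

lemma vadd_cancel_vneg_right [simp]: "vadd (vadd u v) (vneg v) = u"
  by (simp add: vadd_def vneg_def)

lemma vadd_vneg_cancel_right [simp]: "vadd (vneg (vadd u v)) v = vneg u"
  by (simp add: vadd_def vneg_def)

lemma vadd_vneg_cancel_left [simp]: "vadd u (vneg (vadd u v)) = vneg v"
  by (simp add: vadd_def vneg_def)

lemma mapply_vneg: "mapply A (vneg u) = vneg (mapply A u)"
  by (cases A; cases u) (simp add: mapply_def vneg_def)

lemma mapply_vadd: "mapply A (vadd u v) = vadd (mapply A u) (mapply A v)"
  by (cases A; cases u; cases v) (simp add: mapply_def vadd_def algebra_simps)

lemma mapply_vsmul: "mapply A (vsmul m u) = vsmul m (mapply A u)"
  by (cases A; cases u) (simp add: mapply_def vsmul_def algebra_simps)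

lemma mapply_mmul: "mapply (mmul A B) u = mapply A (mapply B u)"
  by (cases A; cases B; cases u) (simp add: mapply_def mmul_def algebra_simps)

lemma image_mapply_mmul: "mapply (mmul A B) ` X = mapply A ` mapply B ` X"
  by (simp add: image_image mapply_mmul)

lemma mapply_matI [simp]: "mapply matI u = u"
  by (cases u) (simp add: mapply_def matI_def)

lemma mdet_mmul: "mdet (mmul A B) = mdet A * mdet B"
  by (cases A; cases B) (simp add: mdet_def mmul_def algebra_simps)

lemma SL2Z_mmul: "A \<in> SL2Z \<Longrightarrow> B \<in> SL2Z \<Longrightarrow> mmul A B \<in> SL2Z"
  by (simp add: SL2Z_def mdet_mmul)

lemma SL2Z_madj: "A \<in> SL2Z \<Longrightarrow> madj A \<in> SL2Z"
  by (cases A) (simp add: SL2Z_def mdet_def madj_def algebra_simps)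

lemma mmul_madj_left: "A \<in> SL2Z \<Longrightarrow> mmul (madj A) A = matI"
  by (cases A) (simp add: SL2Z_def mdet_def madj_def mmul_def matI_def algebra_simps)

lemma mapply_madj_left: "A \<in> SL2Z \<Longrightarrow> mapply (madj A) (mapply A u) = u"
  by (metis mapply_mmul mmul_madj_left mapply_matI)

lemma mmul_madj_right: "A \<in> SL2Z \<Longrightarrow> mmul A (madj A) = matI"
  by (cases A) (simp add: SL2Z_def mdet_def madj_def mmul_def matI_def algebra_simps)

lemma mapply_madj_right: "A \<in> SL2Z \<Longrightarrow> mapply A (mapply (madj A) u) = u"
  by (metis mapply_mmul mmul_madj_right mapply_matI)

lemma image_mapply_madj_left: "A \<in> SL2Z \<Longrightarrow> mapply (madj A) ` mapply A ` X = X"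
  by (simp add: image_image mapply_madj_left)

lemma image_mapply_madj_right: "A \<in> SL2Z \<Longrightarrow> mapply A ` mapply (madj A) ` X = X"
  by (simp add: image_image mapply_madj_right)

lemma inj_mapply: "A \<in> SL2Z \<Longrightarrow> inj (mapply A)"
  by (metis injI mapply_madj_left)

lemma image_mapply_hexagon: "mapply A ` hexagon a b = hexagon (mapply A a) (mapply A b)"
  by (simp add: hexagon_def mapply_vneg mapply_vadd)

lemma is_basis_mapply:
  assumes A: "A \<in> SL2Z" and ab: "is_basis a b"
  shows "is_basis (mapply A a) (mapply A b)"
  unfolding is_basis_def
proof
  fix v
  have coords: "v = vadd (vsmul m (mapply A a)) (vsmul n (mapply A b))
      \<longleftrightarrow> mapply (madj A) v = vadd (vsmul m a) (vsmul n b)" for m n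
    by (metis A mapply_vadd mapply_vsmul mapply_madj_left mapply_madj_right)
  have "\<exists>!mn. mapply (madj A) v = vadd (vsmul (fst mn) a) (vsmul (snd mn) b)"
    using ab unfolding is_basis_def by blast
  then show "\<exists>!mn. v = vadd (vsmul (fst mn) (mapply A a)) (vsmul (snd mn) (mapply A b))"
    by (simp only: coords)
qed

lemma admissible_mapply: "A \<in> SL2Z \<Longrightarrow> admissible H \<Longrightarrow> admissible (mapply A ` H)"
  unfolding admissible_def by (metis is_basis_mapply image_mapply_hexagon)

lemma adj_mapply:
  assumes A: "A \<in> SL2Z" and HK: "adj H K"
  shows "adj (mapply A ` H) (mapply A ` K)"
proof -
  obtain s m where "m \<noteq> s" "m \<noteq> vneg s" "{s, vneg s, m, vneg m} \<subseteq> H \<inter> K"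
    using HK unfolding adj_def by blast
  moreover have "inj (mapply A)"
    using A by (rule inj_mapply)
  ultimately have "mapply A m \<noteq> mapply A s" "mapply A m \<noteq> vneg (mapply A s)"
    "{mapply A s, vneg (mapply A s), mapply A m, vneg (mapply A m)}
       \<subseteq> mapply A ` H \<inter> mapply A ` K"
    by (auto simp: inj_eq mapply_vneg[symmetric])
  moreover have "mapply A ` H \<noteq> mapply A ` K"
    using HK \<open>inj (mapply A)\<close> by (simp add: adj_def inj_image_eq_iff)
  ultimately show ?thesis
    using HK admissible_mapply[OF A] unfolding adj_def by blast
qed

lemma adj_sym: "adj H K \<Longrightarrow> adj K H"
  unfolding adj_def by blast

lemma hexagon_swap: "hexagon a b = hexagon b a"
  unfolding hexagon_def vadd_commute[of b a] by auto

lemma hexagon_through_vertex: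
  assumes "s \<in> hexagon a b"
  obtains b' where "hexagon a b = hexagon s b'"
proof -
  have "s = a \<or> s = vneg a \<or> s = b \<or> s = vneg b \<or> s = vadd a b \<or> s = vneg (vadd a b)"
    using assms by (simp add: hexagon_def)
  moreover have "hexagon a b = hexagon (vneg a) (vneg b)"
    "hexagon a b = hexagon (vadd a b) (vneg b)" "hexagon a b = hexagon (vneg (vadd a b)) b"
    by (auto simp: hexagon_def)
  moreover from this(1) have "hexagon a b = hexagon (vneg b) (vneg a)"
    by (metis hexagon_swap)
  ultimately show ?thesis
    using that hexagon_swap by metis
qed

lemma hexagon_through_two_pairs:
  assumes "{s, vneg s, m, vneg m} \<subseteq> hexagon a b" "m \<noteq> s" "m \<noteq> vneg s"
  shows "hexagon a b = hexagon s m \<or> hexagon a b = hexagon s (vneg m)"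
proof -
  obtain b' where ab: "hexagon a b = hexagon s b'"
    using assms(1) hexagon_through_vertex by blast
  have "m \<in> hexagon s b'"
    using assms(1) ab by auto
  then have "m = b' \<or> m = vneg b' \<or> m = vadd s b' \<or> m = vneg (vadd s b')"
    using assms(2,3) unfolding hexagon_def by auto
  moreover have "hexagon s b' = hexagon s (vneg (vadd s b'))"
    by (auto simp: hexagon_def)
  ultimately show ?thesis
    unfolding ab by (metis vneg_vneg)
qed

lemma is_basis_standard: "is_basis (1,0) (0,1)"
  unfolding is_basis_def
proof
  fix v :: vec
  show "\<exists>!mn. v = vadd (vsmul (fst mn) (1,0)) (vsmul (snd mn) (0,1))"
    by (rule ex1I[of _ v]) (auto simp: vadd_def vsmul_def)
qed

lemma W0_hexagon: "W0 = mapply matL ` hexagon (1,0) (0,1)"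
  by (simp add: W0_def hexagon_def matL_def mapply_def vneg_def vadd_def insert_commute)

lemma admissible_W0: "admissible W0"
  unfolding W0_hexagon using is_basis_standard
  by (metis admissible_def admissible_mapply matL_SL2Z)

lemma image_mapply_mneg_W0: "mapply (mneg A) ` W0 = mapply A ` W0"
proof -
  have "mapply (mneg A) v = mapply A (vneg v)" for v
    by (cases A; cases v) (simp add: mapply_def mneg_def vneg_def)
  moreover have "vneg ` W0 = W0"
    by (auto simp: W0_def vneg_def)
  ultimately show ?thesis
    by (metis image_cong image_image)
qed

lemma image_mapply_W0:
  "mapply matT ` W0 = hexagon (1,0) (0,1)"
  "mapply matS ` W0 = hexagon (1,0) (0,1)"
  "mapply matS' ` W0 = hexagon (1,0) (0,1)"
  "mapply matT' ` W0 = hexagon (1,0) (1,-1)"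
  "mapply matL ` W0 = hexagon (1,-1) (0,-1)"
  by (auto simp: W0_def hexagon_def special_mat_defs mapply_def vneg_def vadd_def)

lemma adj_W0_matT: "adj W0 (mapply matT ` W0)"
  unfolding adj_def
proof (intro conjI exI)
  show "admissible (mapply matT ` W0)"
    using matT_SL2Z admissible_W0 by (rule admissible_mapply)
  show "{(1,0), vneg (1,0), (0,1), vneg (0,1)} \<subseteq> W0 \<inter> mapply matT ` W0"
    unfolding image_mapply_W0 by (simp add: W0_def hexagon_def vneg_def vadd_def)
  have "(1,-1) \<in> W0" "(1,-1) \<notin> mapply matT ` W0"
    unfolding image_mapply_W0 by (simp_all add: W0_def hexagon_def vneg_def vadd_def)
  then show "W0 \<noteq> mapply matT ` W0"
    by blast
qed (simp_all add: admissible_W0 vneg_def)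

definition generators :: "mat set" where
  "generators = {matS, matS', matT, matT'}"

lemma generators_SL2Z: "X \<in> generators \<Longrightarrow> X \<in> SL2Z"
  using special_mats_SL2Z by (auto simp: generators_def)

lemma adj_W0_generator: "X \<in> generators \<Longrightarrow> adj W0 (mapply X ` W0)"
proof -
  have "mmul matT' matT = matI"
    by (simp add: mmul_def special_mat_defs)
  then have "mapply matT' ` mapply matT ` W0 = W0"
    by (simp flip: image_mapply_mmul)
  then have "adj (mapply matT' ` W0) W0"
    using adj_mapply[OF matT'_SL2Z adj_W0_matT] by simp
  then have "adj W0 (mapply matT' ` W0)"
    by (rule adj_sym)
  moreover assume "X \<in> generators"
  ultimately show ?thesis
    using adj_W0_matT by (auto simp: generators_def image_mapply_W0)
qed

lemma adj_W0_cases: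
  assumes "adj W0 K"
  obtains X where "X \<in> {matT, matT', matL}" "K = mapply X ` W0"
proof -
  obtain s m where sm: "m \<noteq> s" "m \<noteq> vneg s" "{s, vneg s, m, vneg m} \<subseteq> W0 \<inter> K"
    using assms unfolding adj_def by blast
  obtain a b where "K = hexagon a b"
    using assms unfolding adj_def admissible_def by blast
  with sm have "K = hexagon s m \<or> K = hexagon s (vneg m)"
    using hexagon_through_two_pairs by blast
  moreover have "s \<in> W0" "m \<in> W0"
    using sm(3) by auto
  moreover have "K \<noteq> W0"
    using assms unfolding adj_def by blast
  ultimately have "K = mapply matT ` W0 \<or> K = mapply matT' ` W0 \<or> K = mapply matL ` W0"
    using sm(1,2) unfolding image_mapply_W0 unfolding W0_def
    apply (simp only: insert_iff empty_iff simp_thms)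
    apply (elim disjE)
    apply (simp_all add: hexagon_def vneg_def vadd_def insert_commute)
    done
  then show ?thesis
    using that[of matT] that[of matT'] that[of matL] by auto
qed

text \<open>The formula is the sign of the permutation induced on the three nonzero vectors of F2^2,
  under which S and T act as transpositions.\<close>

definition chi :: "mat \<Rightarrow> int" where
  "chi M = (case M of (a,b,c,d) \<Rightarrow> (a*c + b*c + b*d) mod 2)"

lemma chi_range: "chi M \<in> {0,1}"
  by (cases M) (auto simp: chi_def)

lemma chi_special:
  shows chi_matI: "chi matI = 0" and chi_matT: "chi matT = 1"
    and chi_matT': "chi matT' = 1" and chi_matL: "chi matL = 1"
  by (simp_all add: chi_def special_mat_defs)

lemma chi_mmul:
  assumes "A \<in> SL2Z" "B \<in> SL2Z"
  shows "chi (mmul A B) = (chi A + chi B) mod 2"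
proof -
  obtain a b c d e f g h where AB: "A = (a,b,c,d)" "B = (e,f,g,h)"
    by (cases A; cases B) auto
  have "odd (a*d - b*c)" "odd (e*h - f*g)"
    using assms AB by (auto simp: SL2Z_def mdet_def)
  then have "even ((a*e + b*g) * (c*e + d*g) + (a*f + b*h) * (c*e + d*g) + (a*f + b*h) * (c*f + d*h))
      \<longleftrightarrow> even ((a*c + b*c + b*d) + (e*g + f*g + f*h))"
    unfolding even_add even_diff even_mult_iff
    by (cases "even a"; cases "even b"; cases "even c"; cases "even d";
        cases "even e"; cases "even f"; cases "even g"; cases "even h") simp_all
  then have "((a*e + b*g) * (c*e + d*g) + (a*f + b*h) * (c*e + d*g) + (a*f + b*h) * (c*f + d*h)) mod 2
      = ((a*c + b*c + b*d) + (e*g + f*g + f*h)) mod 2"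
    by (metis even_iff_mod_2_eq_zero odd_iff_mod_2_eq_one)
  then show ?thesis
    by (simp add: AB chi_def mmul_def mod_add_eq)
qed

lemma mod2_add_eq_0_iff: "(x::int) \<in> {0,1} \<Longrightarrow> y \<in> {0,1} \<Longrightarrow> (x + y) mod 2 = 0 \<longleftrightarrow> x = y"
  by auto

lemma chi_stabilizer_W0:
  assumes C: "C \<in> SL2Z" and CW0: "mapply C ` W0 = W0"
  shows "chi C = 0"
proof -
  obtain a b c d where Cabcd: "C = (a,b,c,d)"
    by (cases C) auto
  have "mapply C (1,0) \<in> W0" "mapply C (0,1) \<in> W0" "mapply C (1,-1) \<in> W0"
    using CW0 by (auto simp: W0_def)
  then have "(a,c) \<in> W0" "(b,d) \<in> W0" "(a-b,c-d) \<in> W0"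
    by (simp_all add: Cabcd mapply_def)
  moreover have "a*d - b*c = 1"
    using C Cabcd by (simp add: SL2Z_def mdet_def)
  ultimately have "(a*c + b*c + b*d) mod 2 = 0"
    unfolding W0_def
    apply (simp only: insert_iff empty_iff simp_thms prod.inject)
    apply (elim disjE conjE; simp)
    done
  then show ?thesis
    by (simp add: Cabcd chi_def)
qed

lemma chi_orbit_W0:
  assumes A: "A \<in> SL2Z" and B: "B \<in> SL2Z" and AB: "mapply A ` W0 = mapply B ` W0"
  shows "chi A = chi B"
proof -
  have "mapply (mmul (madj B) A) ` W0 = W0"
    unfolding image_mapply_mmul AB using B by (rule image_mapply_madj_left)
  then have "chi (mmul (madj B) A) = 0"
    using chi_stabilizer_W0 SL2Z_mmul[OF SL2Z_madj[OF B] A] by blast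
  then have "(chi (madj B) + chi A) mod 2 = 0"
    using chi_mmul[OF SL2Z_madj[OF B] A] by simp
  moreover have "(chi (madj B) + chi B) mod 2 = 0"
    using chi_mmul[OF SL2Z_madj[OF B] B] mmul_madj_left[OF B] chi_matI by simp
  ultimately show ?thesis
    unfolding mod2_add_eq_0_iff[OF chi_range chi_range] by simp
qed

lemma adj_W0_orbit_step:
  assumes B: "B \<in> SL2Z" and adj: "adj (mapply B ` W0) K"
  obtains C where "C \<in> SL2Z" "K = mapply C ` W0" "chi C = (chi B + 1) mod 2"
proof -
  have "adj (mapply (madj B) ` mapply B ` W0) (mapply (madj B) ` K)"
    using SL2Z_madj[OF B] adj by (rule adj_mapply)
  then have "adj W0 (mapply (madj B) ` K)"
    unfolding image_mapply_madj_left[OF B] .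
  then obtain X where X: "X \<in> {matT, matT', matL}" "mapply (madj B) ` K = mapply X ` W0"
    by (rule adj_W0_cases)
  then have X_SL2Z: "X \<in> SL2Z" and chi_X: "chi X = 1"
    using special_mats_SL2Z chi_special by auto
  show ?thesis
  proof (rule that)
    show "mmul B X \<in> SL2Z"
      using B X_SL2Z by (rule SL2Z_mmul)
    have "K = mapply B ` mapply (madj B) ` K"
      using image_mapply_madj_right[OF B] by simp
    then show "K = mapply (mmul B X) ` W0"
      unfolding X(2) image_mapply_mmul .
    show "chi (mmul B X) = (chi B + 1) mod 2"
      using chi_mmul[OF B X_SL2Z] chi_X by simp
  qed
qed

lemma relpowp_adj_W0_chi:
  "(adj ^^ n) W0 K \<Longrightarrow> \<exists>B\<in>SL2Z. K = mapply B ` W0 \<and> chi B = int n mod 2"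
proof (induction n arbitrary: K)
  case 0
  then show ?case
    using matI_SL2Z chi_matI by force
next
  case (Suc n)
  then obtain H where "(adj ^^ n) W0 H" "adj H K"
    by auto
  then obtain B where B: "B \<in> SL2Z" "H = mapply B ` W0" "chi B = int n mod 2"
    using Suc.IH by blast
  then obtain C where "C \<in> SL2Z" "K = mapply C ` W0" "chi C = (chi B + 1) mod 2"
    using adj_W0_orbit_step \<open>adj H K\<close> by blast
  moreover have "(chi B + 1) mod 2 = int (Suc n) mod 2"
    using B(3) by (simp add: mod_simps add.commute)
  ultimately show ?case
    by auto
qed

definition euclid_size :: "mat \<Rightarrow> nat" where
  "euclid_size M = (case M of (a,b,c,d) \<Rightarrow> nat (2 * \<bar>c\<bar> + \<bar>d\<bar>))"

lemma SL2Z_euclid_step: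
  assumes M: "(a,b,c,d) \<in> SL2Z" and c: "c \<noteq> 0"
  obtains N X where "N \<in> SL2Z" "X \<in> generators" "mmul N X = (a,b,c,d)"
    "euclid_size N < euclid_size (a,b,c,d)"
proof -
  have det: "a*d - b*c = 1"
    using M by (simp add: SL2Z_def mdet_def)
  have "d \<noteq> 0" if "\<bar>c\<bar> \<le> \<bar>d\<bar>"
    using that c by auto
  then consider "\<bar>c\<bar> \<le> \<bar>d\<bar>" "0 < c*d" | "\<bar>c\<bar> \<le> \<bar>d\<bar>" "c*d < 0" | "\<bar>d\<bar> < \<bar>c\<bar>"
    using c by (metis linorder_neq_iff mult_eq_0_iff not_le)
  then show ?thesis
  proof cases
    case 1
    then have "\<bar>d - c\<bar> < \<bar>d\<bar>"
      using c by (cases "c > 0"; cases "d > 0") (auto simp: zero_less_mult_iff)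
    then show ?thesis
      using that[of "(a, b-a, c, d-c)" matT] det
      by (simp add: SL2Z_def mdet_def generators_def mmul_def matT_def euclid_size_def algebra_simps)
  next
    case 2
    then have "\<bar>c + d\<bar> < \<bar>d\<bar>"
      using c by (cases "c > 0"; cases "d > 0") (auto simp: mult_less_0_iff)
    then show ?thesis
      using that[of "(a, a+b, c, c+d)" matT'] det
      by (simp add: SL2Z_def mdet_def generators_def mmul_def matT'_def euclid_size_def algebra_simps)
  next
    case 3
    then show ?thesis
      using that[of "(b, -a, d, -c)" matS'] det
      by (simp add: SL2Z_def mdet_def generators_def mmul_def matS'_def euclid_size_def algebra_simps)
  qed
qed

inductive_set generated :: "mat set" where
  generated_one: "matI \<in> generated"
| generated_mult: "M \<in> generated \<Longrightarrow> X \<in> generators \<Longrightarrow> mmul M X \<in> generated"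

lemma generated_SL2Z: "M \<in> generated \<Longrightarrow> M \<in> SL2Z"
  by (induction rule: generated.induct) (simp_all add: special_mats_SL2Z generators_SL2Z SL2Z_mmul)

lemma unitriangular_generated: "(1, b, 0, 1) \<in> generated" "(-1, b, 0, -1) \<in> generated"
proof -
  have "(1, int n, 0, 1) \<in> generated \<and> (1, - int n, 0, 1) \<in> generated" for n
  proof (induction n)
    case 0
    then show ?case
      using generated_one by (simp add: matI_def)
  next
    case (Suc n)
    have "mmul (1, int n, 0, 1) matT = (1, int (Suc n), 0, 1)"
      "mmul (1, - int n, 0, 1) matT' = (1, - int (Suc n), 0, 1)"
      by (simp_all add: mmul_def matT_def matT'_def)
    then show ?case
      using Suc generated_mult[of "(1, int n, 0, 1)" matT] generated_mult[of "(1, - int n, 0, 1)" matT']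
      by (simp add: generators_def)
  qed
  then show upper: "(1, b, 0, 1) \<in> generated" for b
    by (cases "0 \<le> b") (metis nat_0_le, metis minus_minus nat_0_le neg_0_le_iff_le nle_le)
  have "mmul (mmul (1, -b, 0, 1) matS) matS = (-1, b, 0, -1)"
    by (simp add: mmul_def matS_def)
  then show "(-1, b, 0, -1) \<in> generated"
    using upper generated_mult by (metis generators_def insertI1)
qed

lemma SL2Z_eq_generated: "SL2Z = generated"
proof
  show "SL2Z \<subseteq> generated"
  proof
    show "M \<in> generated" if "M \<in> SL2Z" for M
      using that
    proof (induction M rule: measure_induct_rule[where f = euclid_size])
      case (less M)
      obtain a b c d where M: "M = (a,b,c,d)"
        by (cases M) auto
      show ?case
      proof (cases "c = 0")
        case True
        then have "a * d = 1"
          using less.prems M by (simp add: SL2Z_def mdet_def)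
        then show ?thesis
          using True M unitriangular_generated by (auto simp: zmult_eq_1_iff)
      next
        case False
        then show ?thesis
          using SL2Z_euclid_step less M generated_mult by metis
      qed
    qed
  qed
  show "generated \<subseteq> SL2Z"
    using generated_SL2Z by blast
qed

lemma SL2Z_induct [consumes 1, case_names one mult]:
  assumes "M \<in> SL2Z"
    and one: "P matI"
    and mult: "\<And>M X. M \<in> SL2Z \<Longrightarrow> X \<in> generators \<Longrightarrow> P M \<Longrightarrow> P (mmul M X)"
  shows "P M"
proof -
  have "M \<in> generated"
    using assms(1) SL2Z_eq_generated by simp
  then show ?thesis
    by (induction rule: generated.induct) (auto intro: one mult generated_SL2Z)
qed

lemma relpowp_adj_W0_connected:
  assumes "A \<in> SL2Z"
  shows "\<exists>n. (adj ^^ n) W0 (mapply A ` W0)"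
  using assms
proof (induction rule: SL2Z_induct)
  case one
  show ?case
    by (rule exI[of _ 0]) simp
next
  case (mult M X)
  then obtain n where "(adj ^^ n) W0 (mapply M ` W0)"
    by blast
  moreover have "adj (mapply M ` W0) (mapply M ` mapply X ` W0)"
    using mult.hyps(1) adj_W0_generator[OF mult.hyps(2)] by (rule adj_mapply)
  ultimately have "(adj ^^ Suc n) W0 (mapply (mmul M X) ` W0)"
    unfolding image_mapply_mmul by (rule relpowp_Suc_I)
  then show ?case
    by blast
qed

lemma cfun_mod2:
  assumes A: "A \<in> SL2Z"
  shows "int (cfun A) mod 2 = chi A"
proof -
  obtain n where "(adj ^^ n) W0 (mapply A ` W0)"
    using relpowp_adj_W0_connected[OF A] by blast
  then have "(adj ^^ cfun A) W0 (mapply A ` W0)"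
    unfolding cfun_def gdist_def by (rule LeastI)
  then obtain B where "B \<in> SL2Z" "mapply A ` W0 = mapply B ` W0" "chi B = int (cfun A) mod 2"
    using relpowp_adj_W0_chi by blast
  then show ?thesis
    using chi_orbit_W0[OF A] by simp
qed

lemma hom_Z2_range: "hom_Z2 f \<Longrightarrow> A \<in> SL2Z \<Longrightarrow> f A \<in> {0,1}"
  by (simp add: hom_Z2_def)

lemma hom_Z2_mmul:
  "hom_Z2 f \<Longrightarrow> A \<in> SL2Z \<Longrightarrow> B \<in> SL2Z \<Longrightarrow> f (mmul A B) = (f A + f B) mod 2"
  by (simp add: hom_Z2_def)

lemma hom_Z2_cong: "(\<And>A. A \<in> SL2Z \<Longrightarrow> f A = g A) \<Longrightarrow> hom_Z2 f \<longleftrightarrow> hom_Z2 g"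
  by (simp add: hom_Z2_def SL2Z_mmul)

lemma hom_Z2_chi: "hom_Z2 chi"
  unfolding hom_Z2_def using chi_range chi_mmul by blast

lemma hom_Z2_zero: "hom_Z2 (\<lambda>_. 0)"
  by (simp add: hom_Z2_def)

lemma hom_Z2_matI:
  assumes f: "hom_Z2 f"
  shows "f matI = 0"
proof -
  have "mmul matI matI = matI"
    by (simp add: mmul_def matI_def)
  then have "f matI = (f matI + f matI) mod 2"
    using hom_Z2_mmul[OF f matI_SL2Z matI_SL2Z] by simp
  then show ?thesis
    by presburger
qed

lemma hom_Z2_inverse_eq:
  assumes f: "hom_Z2 f" and X: "X \<in> SL2Z" and Y: "Y \<in> SL2Z" and XY: "mmul X Y = matI"
  shows "f X = f Y"
proof -
  have "(f X + f Y) mod 2 = 0"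
    using hom_Z2_mmul[OF f X Y] hom_Z2_matI[OF f] XY by simp
  then show ?thesis
    using mod2_add_eq_0_iff[OF hom_Z2_range[OF f X] hom_Z2_range[OF f Y]] by simp
qed

lemma hom_Z2_matS_matT:
  assumes f: "hom_Z2 f"
  shows "f matS = f matT"
proof -
  define U where "U = mmul matS matT"
  have U: "U \<in> SL2Z" "mmul U U \<in> SL2Z"
    unfolding U_def using special_mats_SL2Z by (simp_all add: SL2Z_mmul)
  have "f (mmul (mmul U U) U) = f U"
    using hom_Z2_mmul[OF f U(2) U(1)] hom_Z2_mmul[OF f U(1) U(1)] hom_Z2_range[OF f U(1)] by auto
  moreover have "mmul (mmul U U) U = mmul matS matS"
    by (simp add: U_def mmul_def matS_def matT_def)
  moreover have "f (mmul matS matS) = 0"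
    using hom_Z2_mmul[OF f matS_SL2Z matS_SL2Z] by presburger
  ultimately have "(f matS + f matT) mod 2 = 0"
    using hom_Z2_mmul[OF f matS_SL2Z matT_SL2Z] by (simp add: U_def)
  then show ?thesis
    using mod2_add_eq_0_iff[OF hom_Z2_range[OF f] hom_Z2_range[OF f]] matS_SL2Z matT_SL2Z by simp
qed

lemma hom_Z2_generators:
  assumes f: "hom_Z2 f" and X: "X \<in> generators"
  shows "f X = f matT"
proof -
  have "f matS = f matS'"
    by (rule hom_Z2_inverse_eq[OF f matS_SL2Z matS'_SL2Z]) (simp add: mmul_def special_mat_defs)
  moreover have "f matT = f matT'"
    by (rule hom_Z2_inverse_eq[OF f matT_SL2Z matT'_SL2Z]) (simp add: mmul_def special_mat_defs)
  ultimately show ?thesis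
    using X hom_Z2_matS_matT[OF f] by (auto simp: generators_def)
qed

lemma hom_Z2_eqI:
  assumes f: "hom_Z2 f" and g: "hom_Z2 g" and fgT: "f matT = g matT" and A: "A \<in> SL2Z"
  shows "f A = g A"
  using A
proof (induction rule: SL2Z_induct)
  case one
  show ?case
    using hom_Z2_matI[OF f] hom_Z2_matI[OF g] by simp
next
  case (mult M X)
  then have "X \<in> SL2Z" "f X = g X"
    using generators_SL2Z hom_Z2_generators[OF f] hom_Z2_generators[OF g] fgT by simp_all
  then show ?case
    using mult hom_Z2_mmul[OF f] hom_Z2_mmul[OF g] by simp
qed

lemma hom_Z2_unique:
  assumes f: "hom_Z2 f" and onto: "1 \<in> f ` SL2Z" and A: "A \<in> SL2Z"
  shows "f A = chi A"
proof -
  have "f matT \<noteq> 0"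
  proof
    assume "f matT = 0"
    then have "f B = 0" if "B \<in> SL2Z" for B
      using hom_Z2_eqI[OF f hom_Z2_zero _ that] by simp
    then show False
      using onto by auto
  qed
  then have "f matT = chi matT"
    using hom_Z2_range[OF f matT_SL2Z] chi_matT by simp
  then show ?thesis
    using hom_Z2_eqI[OF f hom_Z2_chi _ A] by simp
qed

lemma chi_image: "chi ` SL2Z = {0,1}"
  using chi_range chi_matI chi_matT matI_SL2Z matT_SL2Z by (auto intro: rev_image_eqI)

theorem theorem6:
  shows "(\<forall>A\<in>SL2Z. cfun (mneg A) = cfun A)
   \<and> hom_Z2 (\<lambda>A. int (cfun A) mod 2)
   \<and> (\<lambda>A. int (cfun A) mod 2) ` SL2Z = {0,1}
   \<and> (\<forall>f. hom_Z2 f \<and> (\<forall>A\<in>SL2Z. f (mneg A) = f A) \<and> f ` SL2Z = {0,1}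
          \<longrightarrow> (\<forall>A\<in>SL2Z. f A = int (cfun A) mod 2))"
proof (intro conjI allI impI ballI)
  show "cfun (mneg A) = cfun A" for A
    by (simp add: cfun_def image_mapply_mneg_W0)
  show "hom_Z2 (\<lambda>A. int (cfun A) mod 2)"
    using hom_Z2_cong[of "\<lambda>A. int (cfun A) mod 2" chi] cfun_mod2 hom_Z2_chi by blast
  show "(\<lambda>A. int (cfun A) mod 2) ` SL2Z = {0,1}"
    using image_cong[OF refl cfun_mod2, of SL2Z] chi_image by simp
  show "f A = int (cfun A) mod 2"
    if "hom_Z2 f \<and> (\<forall>A\<in>SL2Z. f (mneg A) = f A) \<and> f ` SL2Z = {0,1}" and "A \<in> SL2Z" for f A
    using that hom_Z2_unique[of f A] cfun_mod2[of A] by simp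
qed

end
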